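(* For any positive integers $g$ and $k$, \[\sum_{S\in\mathcal{C}(k,g)}e_2(S)\le 2F_{g+k},\] where $F_n$ is the $n$-th Fibonacci number ($F_1=F_2=1$, $F_{n+2}=F_{n+1}+F_n$).
   Context: A numerical semigroup $S$ is a submonoid of $\mathbb{N}_0$ with finite complement; its genus is the size of the complement, $m(S)$ its smallest nonzero element, $F(S)$ the largest element of the complement, and $e(S)$ the size of the minimal generating set $(S\setminus\{0\})\setminus((S\setminus\{0\})+(S\setminus\{0\}))$. Define $e_1(S)=\#([m(S),2m(S)-1]\cap S)$ and $e_2(S)=e(S)-e_1(S)$. $\mathcal{C}(k,g)$ is the set of numerical semigroups $S$ of genus $g$ with $2m(S)<F(S)<3m(S)$ and $F(S)=2m(S)+k$. *)

theory Defs
  imports Main "HOL-Number_Theory.Fib"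
begin

definition numerical_semigroup :: "nat set \<Rightarrow> bool" where
  "numerical_semigroup S \<longleftrightarrow> 0 \<in> S \<and> (\<forall>a\<in>S. \<forall>b\<in>S. a + b \<in> S) \<and> finite (UNIV - S)"

definition genus :: "nat set \<Rightarrow> nat" where
  "genus S = card (UNIV - S)"

definition multiplicity :: "nat set \<Rightarrow> nat" where
  "multiplicity S = (LEAST x. x \<in> S \<and> x \<noteq> 0)"

text \<open>Frobenius number: largest element of the complement (only meaningful when genus > 0).\<close>
definition frobenius :: "nat set \<Rightarrow> nat" where
  "frobenius S = Max (UNIV - S)"

definition min_gens :: "nat set \<Rightarrow> nat set" where
  "min_gens S = (S - {0}) - {a + b | a b. a \<in> S - {0} \<and> b \<in> S - {0}}"

definition embdim :: "nat set \<Rightarrow> nat" where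
  "embdim S = card (min_gens S)"

definition e1 :: "nat set \<Rightarrow> nat" where
  "e1 S = card ({multiplicity S .. 2 * multiplicity S - 1} \<inter> S)"

definition e2 :: "nat set \<Rightarrow> int" where
  "e2 S = int (embdim S) - int (e1 S)"

definition C_set :: "nat \<Rightarrow> nat \<Rightarrow> nat set set" where
  "C_set k g = {S. numerical_semigroup S \<and> genus S = g
      \<and> 2 * multiplicity S < frobenius S \<and> frobenius S < 3 * multiplicity S
      \<and> frobenius S = 2 * multiplicity S + k}"

end

theory Submission
  imports Defs
begin

text \<open>
  Let \<open>m\<close> be the multiplicity of \<open>S \<in> C(k, g)\<close>. As \<open>F(S) = 2m + k < 3m\<close>, the semigroup is
  determined by \<open>m\<close> and its Kunz coordinates \<open>f(q) \<in> {1, 2, 3}\<close>, \<open>0 < q < m\<close> (the least \<open>t \<ge> 1\<close>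
  with \<open>tm + q \<in> S\<close>); moreover \<open>f(k) = 3\<close>, \<open>f(q) \<le> 2\<close> for \<open>q > k\<close>, and \<open>g = \<Sum> f(q)\<close>.
  A minimal generator \<open>x \<ge> 2m\<close> has a residue \<open>i = x mod m\<close> with \<open>f(i) \<ge> 2\<close> that is not the sum of
  two residues of Kunz coordinate 1, and distinct minimal generators have distinct residues.
  So \<open>\<Sum> e\<^sub>2(S)\<close> is at most the number of pairs \<open>(S, i)\<close> with \<open>i\<close> such a residue.

  These objects are counted by injective prefix codes into words over \<open>{1, 2}\<close>, of which
  there are \<open>Fib(n + 1)\<close> of weight \<open>n\<close>. The Kunz coordinates of \<open>S\<close> give a word of weight
  \<open>g + k - 4\<close>, so \<open>|C(k, g)| \<le> Fib(g + k - 3)\<close>. A pair \<open>(S, i)\<close> with \<open>i \<noteq> k\<close> is coded by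
  writing \<open>i\<close> in unary and the coordinates \<open>j\<close> and \<open>i - j\<close> jointly; as they are not both 1, each
  such pair saves one unit, which pays for the unary header. This gives weight at most
  \<open>g + k - 2\<close>, so there are fewer than \<open>Fib(g + k + 1)\<close> such pairs, while those with \<open>i = k\<close>
  number at most \<open>|C(k, g)|\<close>. Finally \<open>Fib(n - 3) + Fib(n + 1) \<le> 2 Fib(n)\<close>.
\<close>

section \<open>Compositions into parts 1 and 2\<close>

definition compositions12 :: "nat \<Rightarrow> nat list set" where
  "compositions12 n = {xs. set xs \<subseteq> {1, 2} \<and> sum_list xs = n}"

definition compositions12_le :: "nat \<Rightarrow> nat list set" where
  "compositions12_le n = {xs. set xs \<subseteq> {1, 2} \<and> sum_list xs \<le> n}"

lemma length_le_sum_list_12: "set xs \<subseteq> {1, 2::nat} \<Longrightarrow> length xs \<le> sum_list xs"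
  by (induction xs) auto

lemma finite_compositions12_le: "finite (compositions12_le n)"
proof (rule finite_subset)
  show "compositions12_le n \<subseteq> {xs. set xs \<subseteq> {1, 2} \<and> length xs \<le> n}"
    unfolding compositions12_le_def using length_le_sum_list_12 le_trans by blast
  show "finite {xs. set xs \<subseteq> {1, 2::nat} \<and> length xs \<le> n}"
    by (rule finite_lists_length_le) simp
qed

lemma finite_compositions12: "finite (compositions12 n)"
  by (rule finite_subset[OF _ finite_compositions12_le[of n]])
    (auto simp: compositions12_def compositions12_le_def)

lemma sum_list_12_eq_0: "set xs \<subseteq> {1, 2::nat} \<Longrightarrow> sum_list xs = 0 \<Longrightarrow> xs = []"
  by (cases xs) auto

lemma compositions12_0: "compositions12 0 = {[]}"
  unfolding compositions12_def using sum_list_12_eq_0 by auto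

lemma compositions12_1: "compositions12 1 = {[1]}"
proof -
  have "xs = [1]" if "set xs \<subseteq> {1, 2}" "sum_list xs = 1" for xs :: "nat list"
    using that sum_list_12_eq_0 by (cases xs) auto
  then show ?thesis unfolding compositions12_def by auto
qed

lemma compositions12_Suc_Suc:
  "compositions12 (Suc (Suc n)) = Cons 1 ` compositions12 (Suc n) \<union> Cons 2 ` compositions12 n"
proof
  show "compositions12 (Suc (Suc n)) \<subseteq> Cons 1 ` compositions12 (Suc n) \<union> Cons 2 ` compositions12 n"
  proof
    fix xs assume xs: "xs \<in> compositions12 (Suc (Suc n))"
    then obtain y ys where "xs = y # ys" "y = 1 \<or> y = 2"
      unfolding compositions12_def by (cases xs) auto
    with xs show "xs \<in> Cons 1 ` compositions12 (Suc n) \<union> Cons 2 ` compositions12 n"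
      unfolding compositions12_def by auto
  qed
qed (auto simp: compositions12_def)

lemma card_compositions12: "card (compositions12 n) = fib (Suc n)"
proof (induction n rule: fib.induct)
  case (3 n)
  have "card (compositions12 (Suc (Suc n)))
      = card (Cons 1 ` compositions12 (Suc n)) + card (Cons 2 ` compositions12 n)"
    unfolding compositions12_Suc_Suc by (rule card_Un_disjoint) (auto simp: finite_compositions12)
  also have "\<dots> = card (compositions12 (Suc n)) + card (compositions12 n)"
    by (simp add: card_image)
  finally show ?case using 3 by simp
qed (use compositions12_0 compositions12_1 in simp_all)

lemma card_compositions12_le: "card (compositions12_le n) + 1 = fib (n + 3)"
proof (induction n)
  case 0
  have "compositions12_le 0 = compositions12 0"
    unfolding compositions12_le_def compositions12_def by auto
  then show ?case by (simp add: compositions12_0 numeral_3_eq_3)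
next
  case (Suc n)
  have "compositions12_le (Suc n) = compositions12_le n \<union> compositions12 (Suc n)"
    unfolding compositions12_le_def compositions12_def by auto
  moreover have "compositions12_le n \<inter> compositions12 (Suc n) = {}"
    unfolding compositions12_le_def compositions12_def by auto
  ultimately have "card (compositions12_le (Suc n))
      = card (compositions12_le n) + card (compositions12 (Suc n))"
    by (simp add: card_Un_disjoint finite_compositions12_le finite_compositions12)
  then show ?case using Suc card_compositions12[of "Suc n"] by (simp add: numeral_3_eq_3)
qed

section \<open>Prefix codes\<close>

definition prefix_code_on :: "'v set \<Rightarrow> ('v \<Rightarrow> 'a list) \<Rightarrow> bool" where
  "prefix_code_on D c \<longleftrightarrow> (\<forall>v\<in>D. \<forall>v'\<in>D. \<forall>r r'. c v @ r = c v' @ r' \<longrightarrow> v = v' \<and> r = r')"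

lemma prefix_code_onD:
  "prefix_code_on D c \<Longrightarrow> v \<in> D \<Longrightarrow> v' \<in> D \<Longrightarrow> c v @ r = c v' @ r' \<Longrightarrow> v = v' \<and> r = r'"
  unfolding prefix_code_on_def by blast

lemma prefix_code_on_concat:
  assumes "\<And>x. x \<in> set xs \<Longrightarrow> prefix_code_on (D x) (c x)"
    and "\<And>x. x \<in> set xs \<Longrightarrow> u x \<in> D x" "\<And>x. x \<in> set xs \<Longrightarrow> u' x \<in> D x"
    and "concat (map (\<lambda>x. c x (u x)) xs) @ r = concat (map (\<lambda>x. c x (u' x)) xs) @ r'"
  shows "(\<forall>x\<in>set xs. u x = u' x) \<and> r = r'"
  using assms
proof (induction xs arbitrary: r r')
  case (Cons x xs)
  have head: "u x = u' x \<and> concat (map (\<lambda>x. c x (u x)) xs) @ r = concat (map (\<lambda>x. c x (u' x)) xs) @ r'"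
    by (rule prefix_code_onD[of "D x" "c x"]) (use Cons.prems in simp_all)
  have "(\<forall>y\<in>set xs. u y = u' y) \<and> r = r'"
    by (rule Cons.IH) (use Cons.prems head in simp_all)
  with head show ?case by simp
qed simp

lemma replicate_1_append_2_eq:
  "replicate p (1::nat) @ 2 # r = replicate p' 1 @ 2 # r' \<Longrightarrow> p = p' \<and> r = r'"
proof (induction p arbitrary: p')
  case 0
  then show ?case by (cases p') auto
next
  case (Suc p)
  then show ?case by (cases p') auto
qed

section \<open>Prefix codes for Kunz-type vectors\<close>

text \<open>
  The Kunz coordinate of residue \<open>q\<close> of a semigroup in \<open>C(k, g)\<close> is at most 3 because
  \<open>3m + q > F = 2m + k\<close>; it equals 3 at \<open>q = k\<close> and is at most 2 for \<open>q > k\<close>.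
\<close>

definition kunz_range :: "nat \<Rightarrow> nat \<Rightarrow> nat set" where
  "kunz_range k q = (if q < k then {1, 2, 3} else if q = k then {3} else {1, 2})"

definition admissible :: "nat \<Rightarrow> nat \<Rightarrow> (nat \<Rightarrow> nat) \<Rightarrow> bool" where
  "admissible k m f \<longleftrightarrow> 1 \<le> k \<and> k < m \<and> (\<forall>q\<in>{1..<m}. f q \<in> kunz_range k q)"

definition code_weight :: "nat \<Rightarrow> nat \<Rightarrow> nat \<Rightarrow> nat" where
  "code_weight k q v = (if q < k then v + 1 else if q = k then 0 else v)"

definition digit_code :: "nat \<Rightarrow> nat \<Rightarrow> nat \<Rightarrow> nat list" where
  "digit_code k q v =
     (if q < k then (if v = 1 then [1, 1] else [2, v - 1]) else if q = k then [] else [v])"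

text \<open>The code of a coordinate known to be at least 2; for \<open>q \<noteq> k\<close> it is two units lighter.\<close>

definition reduced_code :: "nat \<Rightarrow> nat \<Rightarrow> nat \<Rightarrow> nat list" where
  "reduced_code k q v = (if q < k then [v - 1] else [])"

text \<open>
  The joint code of two coordinates that are not both 1; unless one of them is \<open>k\<close>, it is one
  unit lighter than the two separate codes.
\<close>

definition pair_code :: "nat \<Rightarrow> nat \<Rightarrow> nat \<Rightarrow> nat \<Rightarrow> nat \<Rightarrow> nat list" where
  "pair_code k j j' a b =
     (if j = k then digit_code k j' b
      else if j' = k then digit_code k j a
      else if a = 1 then 2 # reduced_code k j' b
      else if b = 1 then [1, 1] @ reduced_code k j a
      else [1, 2] @ reduced_code k j a @ reduced_code k j' b)"

definition pair_range :: "nat \<Rightarrow> nat \<Rightarrow> nat \<Rightarrow> (nat \<times> nat) set" where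
  "pair_range k j j' = {(a, b). a \<in> kunz_range k j \<and> b \<in> kunz_range k j' \<and> (a \<noteq> 1 \<or> b \<noteq> 1)}"

definition index_code :: "nat \<Rightarrow> nat list" where
  "index_code i = replicate ((i - 1) div 2) 1 @ [2, if even i then 2 else 1]"

lemma admissible_kunz_range: "admissible k m f \<Longrightarrow> 1 \<le> q \<Longrightarrow> q < m \<Longrightarrow> f q \<in> kunz_range k q"
  unfolding admissible_def by auto

lemma prefix_code_digit_code: "prefix_code_on (kunz_range k q) (digit_code k q)"
  unfolding prefix_code_on_def kunz_range_def digit_code_def by auto

lemma set_digit_code: "v \<in> kunz_range k q \<Longrightarrow> set (digit_code k q v) \<subseteq> {1, 2}"
  unfolding kunz_range_def digit_code_def by auto

lemma sum_list_digit_code: "v \<in> kunz_range k q \<Longrightarrow> sum_list (digit_code k q v) = code_weight k q v"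
  unfolding kunz_range_def digit_code_def code_weight_def by auto

lemma digit_code_nonempty: "q \<noteq> k \<Longrightarrow> digit_code k q v \<noteq> []"
  unfolding digit_code_def by auto

lemma prefix_code_reduced_code: "prefix_code_on (kunz_range k q - {1}) (reduced_code k q)"
  unfolding prefix_code_on_def kunz_range_def reduced_code_def by auto

lemma set_reduced_code: "v \<in> kunz_range k q - {1} \<Longrightarrow> set (reduced_code k q v) \<subseteq> {1, 2}"
  unfolding kunz_range_def reduced_code_def by auto

lemma sum_list_reduced_code:
  "v \<in> kunz_range k q - {1} \<Longrightarrow>
    sum_list (reduced_code k q v) + 2 * of_bool (q \<noteq> k) = code_weight k q v"
  unfolding kunz_range_def reduced_code_def code_weight_def by auto

lemma prefix_code_pair_code:
  "j \<noteq> j' \<Longrightarrow> prefix_code_on (pair_range k j j') (\<lambda>(a, b). pair_code k j j' a b)"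
  unfolding prefix_code_on_def pair_range_def pair_code_def kunz_range_def
    digit_code_def reduced_code_def
  by auto

lemma set_pair_code: "(a, b) \<in> pair_range k j j' \<Longrightarrow> set (pair_code k j j' a b) \<subseteq> {1, 2}"
  unfolding pair_range_def pair_code_def kunz_range_def digit_code_def reduced_code_def by auto

lemma sum_list_pair_code:
  "(a, b) \<in> pair_range k j j' \<Longrightarrow>
    sum_list (pair_code k j j' a b) + 1 \<le> code_weight k j a + code_weight k j' b + of_bool (j = k \<or> j' = k)"
  unfolding pair_range_def pair_code_def kunz_range_def digit_code_def reduced_code_def code_weight_def
  by auto

lemma prefix_code_index_code: "prefix_code_on {1..} index_code"
proof -
  have "i = i' \<and> r = r'"
    if "1 \<le> i" "1 \<le> i'" "index_code i @ r = index_code i' @ r'" for i i' and r r' :: "nat list"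
  proof -
    have "(i - 1) div 2 = (i' - 1) div 2 \<and>
        (if even i then 2 else 1) # r = (if even i' then 2 else 1) # r'"
      by (rule replicate_1_append_2_eq) (use that(3) in \<open>simp add: index_code_def\<close>)
    then have "(i - 1) div 2 = (i' - 1) div 2" and "(if even i then 2 else 1::nat) = (if even i' then 2 else 1)"
      and "r = r'"
      by (auto split: if_splits)
    moreover have "i = 2 * ((i - 1) div 2) + (if even i then 2 else 1)"
      and "i' = 2 * ((i' - 1) div 2) + (if even i' then 2 else 1)"
      using that(1,2) by (cases i; cases i'; auto elim: evenE oddE)+
    ultimately show ?thesis by linarith
  qed
  then show ?thesis unfolding prefix_code_on_def atLeast_iff by blast
qed

lemma set_index_code: "set (index_code i) \<subseteq> {1, 2}"
  unfolding index_code_def by auto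

lemma sum_list_index_code: "sum_list (index_code i) = (i - 1) div 2 + 3 + of_bool (even i)"
  unfolding index_code_def by (simp add: sum_list_replicate)

definition digits_code :: "nat \<Rightarrow> (nat \<Rightarrow> nat) \<Rightarrow> nat list \<Rightarrow> nat list" where
  "digits_code k f qs = concat (map (\<lambda>q. digit_code k q (f q)) qs)"

lemma sum_list_concat: "sum_list (concat xss) = sum_list (map sum_list xss)"
  by (induction xss) simp_all

lemma set_digits_code:
  assumes "admissible k m f" "1 \<le> a"
  shows "set (digits_code k f [a..<m]) \<subseteq> {1, 2}"
proof -
  have "set (digit_code k q (f q)) \<subseteq> {1, 2}" if "q \<in> set [a..<m]" for q
    using that assms by (intro set_digit_code admissible_kunz_range) auto
  then show ?thesis unfolding digits_code_def set_concat set_map by blast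
qed

lemma sum_list_digits_code:
  assumes "admissible k m f" "1 \<le> a"
  shows "sum_list (digits_code k f [a..<m]) = (\<Sum>q\<in>{a..<m}. code_weight k q (f q))"
proof -
  have "sum_list (digits_code k f [a..<m]) = (\<Sum>q\<in>{a..<m}. sum_list (digit_code k q (f q)))"
    unfolding digits_code_def sum_list_concat by (simp add: interv_sum_list_conv_sum_set_nat comp_def)
  also have "\<dots> = (\<Sum>q\<in>{a..<m}. code_weight k q (f q))"
    using assms by (intro sum.cong refl sum_list_digit_code admissible_kunz_range) auto
  finally show ?thesis .
qed

lemma digits_code_inj_of_le:
  assumes f: "admissible k m f" and f': "admissible k m' f'" and "1 \<le> a" "a \<le> m" "m \<le> m'"
    and eq: "digits_code k f [a..<m] = digits_code k f' [a..<m']"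
  shows "m = m' \<and> (\<forall>q\<in>{a..<m}. f q = f' q)"
proof -
  have "[a..<m'] = [a..<m] @ [m..<m']"
    using upt_add_eq_append[of a m "m' - m"] assms(4,5) by simp
  with eq have split_eq: "concat (map (\<lambda>q. digit_code k q (f q)) [a..<m]) @ []
      = concat (map (\<lambda>q. digit_code k q (f' q)) [a..<m]) @ digits_code k f' [m..<m']"
    by (simp add: digits_code_def)
  have "(\<forall>q\<in>set [a..<m]. f q = f' q) \<and> [] = digits_code k f' [m..<m']"
  proof (rule prefix_code_on_concat[of "[a..<m]" "kunz_range k" "digit_code k" f f'])
    show "prefix_code_on (kunz_range k q) (digit_code k q)" for q
      by (rule prefix_code_digit_code)
    show "f q \<in> kunz_range k q" "f' q \<in> kunz_range k q" if "q \<in> set [a..<m]" for q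
      using that assms(3,5) admissible_kunz_range[OF f] admissible_kunz_range[OF f'] by auto
  qed (rule split_eq)
  then have agree: "\<forall>q\<in>set [a..<m]. f q = f' q" and tail: "[] = digits_code k f' [m..<m']"
    by simp_all
  have "m = m'"
  proof (rule ccontr)
    assume "m \<noteq> m'"
    then have "[m..<m'] = m # [Suc m..<m']" using assms(5) upt_conv_Cons by auto
    moreover have "m \<noteq> k" using f unfolding admissible_def by simp
    ultimately show False
      using tail digit_code_nonempty[of m k "f' m"] unfolding digits_code_def by simp
  qed
  with agree show ?thesis by simp
qed

lemma digits_code_inj:
  assumes "admissible k m f" "admissible k m' f'" "1 \<le> a" "a \<le> m" "a \<le> m'"
    and "digits_code k f [a..<m] = digits_code k f' [a..<m']"
  shows "m = m' \<and> (\<forall>q\<in>{a..<m}. f q = f' q)"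
proof (cases "m \<le> m'")
  case True
  then show ?thesis using digits_code_inj_of_le assms by blast
next
  case False
  then show ?thesis using digits_code_inj_of_le[of k m' f' m f a] assms by force
qed

definition candidate :: "nat \<Rightarrow> (nat \<Rightarrow> nat) \<Rightarrow> nat \<Rightarrow> bool" where
  "candidate m f i \<longleftrightarrow> i \<in> {1..<m} \<and> 2 \<le> f i \<and> (\<forall>j\<in>{1..<i}. f j \<noteq> 1 \<or> f (i - j) \<noteq> 1)"

definition pairs_code :: "nat \<Rightarrow> (nat \<Rightarrow> nat) \<Rightarrow> nat \<Rightarrow> nat list" where
  "pairs_code k f i = concat (map (\<lambda>j. pair_code k j (i - j) (f j) (f (i - j))) [1..<(i + 1) div 2])"

definition middle_code :: "nat \<Rightarrow> (nat \<Rightarrow> nat) \<Rightarrow> nat \<Rightarrow> nat list" where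
  "middle_code k f i = (if even i then reduced_code k (i div 2) (f (i div 2)) else [])"

definition candidate_code :: "nat \<Rightarrow> nat \<Rightarrow> (nat \<Rightarrow> nat) \<Rightarrow> nat \<Rightarrow> nat list" where
  "candidate_code k m f i = index_code i @ pairs_code k f i @ middle_code k f i
     @ reduced_code k i (f i) @ digits_code k f [Suc i..<m]"

lemma candidate_pair_range:
  assumes "admissible k m f" "candidate m f i" "j \<in> {1..<(i + 1) div 2}"
  shows "(f j, f (i - j)) \<in> pair_range k j (i - j)" "j \<noteq> i - j"
proof -
  have "1 \<le> j" "j < i - j" "i < m" using assms(2,3) unfolding candidate_def by auto
  with assms show "(f j, f (i - j)) \<in> pair_range k j (i - j)" "j \<noteq> i - j"
    unfolding pair_range_def candidate_def by (auto intro: admissible_kunz_range)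
qed

lemma candidate_middle:
  assumes "admissible k m f" "candidate m f i" "even i"
  shows "f (i div 2) \<in> kunz_range k (i div 2) - {1}"
proof -
  have "i div 2 \<in> {1..<i}" "i - i div 2 = i div 2" "i < m"
    using assms(2,3) unfolding candidate_def by (auto elim!: evenE)
  with assms show ?thesis unfolding candidate_def by (auto intro: admissible_kunz_range)
qed

lemma candidate_self:
  "admissible k m f \<Longrightarrow> candidate m f i \<Longrightarrow> f i \<in> kunz_range k i - {1}"
  unfolding candidate_def by (auto intro: admissible_kunz_range)

lemma pair_index_cases:
  fixes i q :: nat
  assumes "q \<in> {1..i}"
  obtains "q \<in> {1..<(i + 1) div 2}" | "i - q \<in> {1..<(i + 1) div 2}" "q < i"
    | "even i" "q = i div 2" | "q = i"
  using assms unfolding atLeastAtMost_iff atLeastLessThan_iff by atomize_elim presburger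

lemma pairs_code_eqD:
  assumes f: "admissible k m f" and f': "admissible k m' f'"
    and i: "candidate m f i" and i': "candidate m' f' i"
    and eq: "pairs_code k f i @ r = pairs_code k f' i @ r'"
  shows "(\<forall>j\<in>{1..<(i + 1) div 2}. f j = f' j \<and> f (i - j) = f' (i - j)) \<and> r = r'"
proof -
  have "(\<forall>j\<in>set [1..<(i + 1) div 2]. (f j, f (i - j)) = (f' j, f' (i - j))) \<and> r = r'"
  proof (rule prefix_code_on_concat[where D = "\<lambda>j. pair_range k j (i - j)"
        and c = "\<lambda>j (a, b). pair_code k j (i - j) a b"])
    fix j assume j: "j \<in> set [1..<(i + 1) div 2]"
    then show "prefix_code_on (pair_range k j (i - j)) (\<lambda>(a, b). pair_code k j (i - j) a b)"
      using prefix_code_pair_code candidate_pair_range(2)[OF f i] by simp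
    show "(f j, f (i - j)) \<in> pair_range k j (i - j)" "(f' j, f' (i - j)) \<in> pair_range k j (i - j)"
      using j candidate_pair_range(1)[OF f i] candidate_pair_range(1)[OF f' i'] by simp_all
  qed (use eq in \<open>simp add: pairs_code_def\<close>)
  then show ?thesis by simp
qed

lemma middle_code_eqD:
  assumes "admissible k m f" "admissible k m' f'" "candidate m f i" "candidate m' f' i"
    and eq: "middle_code k f i @ r = middle_code k f' i @ r'"
  shows "(even i \<longrightarrow> f (i div 2) = f' (i div 2)) \<and> r = r'"
proof (cases "even i")
  case True
  with eq show ?thesis
    using prefix_code_onD[OF prefix_code_reduced_code candidate_middle[OF assms(1,3) True]
        candidate_middle[OF assms(2,4) True]]
    by (simp add: middle_code_def)
qed (use eq in \<open>simp add: middle_code_def\<close>)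

lemma candidate_code_inj:
  assumes f: "admissible k m f" and f': "admissible k m' f'"
    and i: "candidate m f i" and i': "candidate m' f' i'"
    and eq: "candidate_code k m f i = candidate_code k m' f' i'"
  shows "i = i' \<and> m = m' \<and> (\<forall>q\<in>{1..<m}. f q = f' q)"
proof -
  have "i \<in> {1..}" "i' \<in> {1..}" using i i' unfolding candidate_def by auto
  from prefix_code_onD[OF prefix_code_index_code this eq[unfolded candidate_code_def]]
  have "i = i'" and eq1: "pairs_code k f i @ middle_code k f i @ reduced_code k i (f i)
      @ digits_code k f [Suc i..<m]
    = pairs_code k f' i @ middle_code k f' i @ reduced_code k i (f' i) @ digits_code k f' [Suc i..<m']"
    by blast+
  with i' have i': "candidate m' f' i" by simp
  obtain pairs: "\<forall>j\<in>{1..<(i + 1) div 2}. f j = f' j \<and> f (i - j) = f' (i - j)"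
    and eq2: "middle_code k f i @ reduced_code k i (f i) @ digits_code k f [Suc i..<m]
      = middle_code k f' i @ reduced_code k i (f' i) @ digits_code k f' [Suc i..<m']"
    using pairs_code_eqD[OF f f' i i' eq1] by blast
  obtain middle: "even i \<longrightarrow> f (i div 2) = f' (i div 2)"
    and eq3: "reduced_code k i (f i) @ digits_code k f [Suc i..<m]
      = reduced_code k i (f' i) @ digits_code k f' [Suc i..<m']"
    using middle_code_eqD[OF f f' i i' eq2] by blast
  obtain self: "f i = f' i" and digits: "digits_code k f [Suc i..<m] = digits_code k f' [Suc i..<m']"
    using prefix_code_onD[OF prefix_code_reduced_code candidate_self[OF f i] candidate_self[OF f' i'] eq3]
    by blast
  have "Suc i \<le> m" "Suc i \<le> m'" using i i' unfolding candidate_def by auto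
  with digits_code_inj[OF f f' _ _ _ digits] have "m = m'" and high: "\<forall>q\<in>{Suc i..<m}. f q = f' q"
    by simp_all
  have "f q = f' q" if "q \<in> {1..<m}" for q
  proof (cases "q \<le> i")
    case True
    with that have "q \<in> {1..i}" by simp
    then show ?thesis
    proof (cases rule: pair_index_cases)
      case 2
      then have "i - (i - q) = q" by simp
      with pairs 2(1) show ?thesis by metis
    qed (use pairs middle self in auto)
  qed (use that high in simp)
  with \<open>i = i'\<close> \<open>m = m'\<close> show ?thesis by simp
qed

lemma sum_atLeastLessThan_split_at:
  fixes h :: "nat \<Rightarrow> 'a::comm_monoid_add"
  assumes "a \<le> i" "i < b"
  shows "(\<Sum>q\<in>{a..<b}. h q) = (\<Sum>q\<in>{a..<i}. h q) + h i + (\<Sum>q\<in>{Suc i..<b}. h q)"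
proof -
  have "(\<Sum>q\<in>{a..<b}. h q) = (\<Sum>q\<in>{a..<i}. h q) + (\<Sum>q\<in>{i..<b}. h q)"
    using assms by (intro sum.atLeastLessThan_concat[symmetric]) simp_all
  also have "(\<Sum>q\<in>{i..<b}. h q) = h i + (\<Sum>q\<in>{Suc i..<b}. h q)"
    using assms(2) by (rule sum.atLeast_Suc_lessThan)
  finally show ?thesis by (simp add: add.assoc)
qed

lemma sum_atLeastLessThan_pairs:
  fixes h :: "nat \<Rightarrow> 'a::comm_monoid_add"
  assumes "0 < i"
  shows "(\<Sum>q\<in>{1..<i}. h q)
    = (\<Sum>j\<in>{1..<(i + 1) div 2}. h j + h (i - j)) + (if even i then h (i div 2) else 0)"
proof -
  define t where "t = (i + 1) div 2"
  have upper: "(\<Sum>q\<in>{t..<i}. h q) = (\<Sum>j\<in>{1..<t}. h (i - j)) + (if even i then h (i div 2) else 0)"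
  proof (cases "even i")
    case True
    then have "{t..<i} = insert (i div 2) {Suc t..<i}" "t = i div 2"
      using assms unfolding t_def by (auto elim!: evenE)
    moreover have "(\<Sum>q\<in>{Suc t..<i}. h q) = (\<Sum>j\<in>{1..<t}. h (i - j))"
      by (rule sum.reindex_bij_witness[of _ "\<lambda>q. i - q" "\<lambda>j. i - j"])
        (use True assms in \<open>auto simp: t_def elim!: evenE\<close>)
    ultimately show ?thesis using True by (simp add: add.commute)
  next
    case False
    have "(\<Sum>q\<in>{t..<i}. h q) = (\<Sum>j\<in>{1..<t}. h (i - j))"
      by (rule sum.reindex_bij_witness[of _ "\<lambda>q. i - q" "\<lambda>j. i - j"])
        (use False in \<open>auto simp: t_def elim!: oddE\<close>)
    with False show ?thesis by simp
  qed
  have "(\<Sum>q\<in>{1..<i}. h q) = (\<Sum>q\<in>{1..<t}. h q) + (\<Sum>q\<in>{t..<i}. h q)"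
    by (rule sum.atLeastLessThan_concat[symmetric]) (use assms in \<open>auto simp: t_def\<close>)
  also have "\<dots> = (\<Sum>j\<in>{1..<t}. h j + h (i - j)) + (if even i then h (i div 2) else 0)"
    by (simp add: upper sum.distrib add.assoc)
  finally show ?thesis unfolding t_def .
qed

lemma card_pairs_containing:
  fixes i k :: nat
  shows "card {j \<in> {1..<(i + 1) div 2}. j = k \<or> i - j = k} + of_bool (even i \<and> i div 2 = k) \<le> 1"
proof -
  let ?J = "{j \<in> {1..<(i + 1) div 2}. j = k \<or> i - j = k}"
  have "?J \<subseteq> {min k (i - k)}" by auto
  then have "card ?J \<le> 1" using card_mono[of "{min k (i - k)}" ?J] by simp
  moreover have "?J = {}" if "even i" "i div 2 = k" using that by (auto elim!: evenE)
  ultimately show ?thesis by auto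
qed

lemma sum_list_pairs_code:
  assumes "admissible k m f" "candidate m f i"
  shows "sum_list (pairs_code k f i) + card {1..<(i + 1) div 2}
    \<le> (\<Sum>j\<in>{1..<(i + 1) div 2}. code_weight k j (f j) + code_weight k (i - j) (f (i - j)))
      + card {j \<in> {1..<(i + 1) div 2}. j = k \<or> i - j = k}"
proof -
  let ?P = "{1..<(i + 1) div 2}"
  have "sum_list (pairs_code k f i) = (\<Sum>j\<in>?P. sum_list (pair_code k j (i - j) (f j) (f (i - j))))"
    by (simp add: pairs_code_def sum_list_concat interv_sum_list_conv_sum_set_nat comp_def)
  moreover have "(\<Sum>j\<in>?P. sum_list (pair_code k j (i - j) (f j) (f (i - j)))) + (\<Sum>j\<in>?P. 1)
      \<le> (\<Sum>j\<in>?P. code_weight k j (f j) + code_weight k (i - j) (f (i - j)))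
        + (\<Sum>j\<in>?P. of_bool (j = k \<or> i - j = k))"
    unfolding sum.distrib[symmetric]
    by (intro sum_mono sum_list_pair_code candidate_pair_range[OF assms])
  moreover have "(\<Sum>j\<in>?P. of_bool (j = k \<or> i - j = k)) = card {j \<in> ?P. j = k \<or> i - j = k}"
    by (subst sum_of_bool_eq) (simp_all add: Int_def)
  ultimately show ?thesis by simp
qed

lemma sum_list_middle_code:
  assumes "admissible k m f" "candidate m f i"
  shows "sum_list (middle_code k f i) + 2 * of_bool (even i \<and> i div 2 \<noteq> k)
    = (if even i then code_weight k (i div 2) (f (i div 2)) else 0)"
proof (cases "even i")
  case True
  then show ?thesis
    using sum_list_reduced_code[OF candidate_middle[OF assms True]] by (simp add: middle_code_def)
qed (simp add: middle_code_def)

lemma sum_list_candidate_code: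
  assumes f: "admissible k m f" and i: "candidate m f i" "i \<noteq> k"
  shows "sum_list (candidate_code k m f i) \<le> (\<Sum>q\<in>{1..<m}. code_weight k q (f q)) + 2"
proof -
  let ?w = "\<lambda>q. code_weight k q (f q)"
  let ?P = "{1..<(i + 1) div 2}"
  have "1 \<le> i" "i < m" using i unfolding candidate_def by auto
  then have "(\<Sum>q\<in>{1..<m}. ?w q) = (\<Sum>q\<in>{1..<i}. ?w q) + ?w i + (\<Sum>q\<in>{Suc i..<m}. ?w q)"
    by (rule sum_atLeastLessThan_split_at)
  also have "(\<Sum>q\<in>{1..<i}. ?w q) = (\<Sum>j\<in>?P. ?w j + ?w (i - j)) + (if even i then ?w (i div 2) else 0)"
    using \<open>1 \<le> i\<close> by (intro sum_atLeastLessThan_pairs) simp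
  finally have total: "(\<Sum>q\<in>{1..<m}. ?w q) = (\<Sum>j\<in>?P. ?w j + ?w (i - j))
      + (if even i then ?w (i div 2) else 0) + ?w i + (\<Sum>q\<in>{Suc i..<m}. ?w q)" .
  have index: "sum_list (index_code i) = card ?P + 3 + of_bool (even i)"
    by (simp add: sum_list_index_code)
  have self: "sum_list (reduced_code k i (f i)) + 2 = ?w i"
    using sum_list_reduced_code[OF candidate_self[OF f i(1)]] i(2) by simp
  have "of_bool (even i \<and> i div 2 \<noteq> k) + of_bool (even i \<and> i div 2 = k) = (of_bool (even i) :: nat)"
    by auto
  then show ?thesis
    using total index self sum_list_pairs_code[OF f i(1)] sum_list_middle_code[OF f i(1)]
      card_pairs_containing[of i k] sum_list_digits_code[OF f, of "Suc i"]
    unfolding candidate_code_def by simp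
qed

lemma sum_code_weight:
  assumes "admissible k m f"
  shows "(\<Sum>q\<in>{1..<m}. code_weight k q (f q)) + 4 = (\<Sum>q\<in>{1..<m}. f q) + k"
proof -
  have k: "1 \<le> k" "k < m" "f k = 3"
    using assms admissible_kunz_range[OF assms, of k] unfolding admissible_def kunz_range_def by auto
  have "(\<Sum>q\<in>{1..<m}. code_weight k q (f q))
      = (\<Sum>q\<in>{1..<k}. code_weight k q (f q)) + code_weight k k (f k)
        + (\<Sum>q\<in>{Suc k..<m}. code_weight k q (f q))"
    using k by (intro sum_atLeastLessThan_split_at) simp_all
  also have "\<dots> = (\<Sum>q\<in>{1..<k}. f q + 1) + (\<Sum>q\<in>{Suc k..<m}. f q)"
    by (simp add: code_weight_def)
  also have "(\<Sum>q\<in>{1..<k}. f q + 1) = (\<Sum>q\<in>{1..<k}. f q) + (k - 1)"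
    unfolding sum.distrib by simp
  finally have "(\<Sum>q\<in>{1..<m}. code_weight k q (f q))
      = (\<Sum>q\<in>{1..<k}. f q) + (k - 1) + (\<Sum>q\<in>{Suc k..<m}. f q)" .
  moreover have "(\<Sum>q\<in>{1..<m}. f q) = (\<Sum>q\<in>{1..<k}. f q) + f k + (\<Sum>q\<in>{Suc k..<m}. f q)"
    using k by (intro sum_atLeastLessThan_split_at) simp_all
  ultimately show ?thesis using k by linarith
qed

lemma set_candidate_code:
  assumes f: "admissible k m f" and i: "candidate m f i"
  shows "set (candidate_code k m f i) \<subseteq> {1, 2}"
proof -
  have "set (pair_code k j (i - j) (f j) (f (i - j))) \<subseteq> {1, 2}" if "j \<in> set [1..<(i + 1) div 2]" for j
    using set_pair_code candidate_pair_range(1)[OF f i] that by simp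
  then have "set (pairs_code k f i) \<subseteq> {1, 2}"
    unfolding pairs_code_def set_concat set_map by blast
  moreover have "set (middle_code k f i) \<subseteq> {1, 2}"
  proof (cases "even i")
    case True
    then show ?thesis
      using set_reduced_code[OF candidate_middle[OF f i True]] by (simp add: middle_code_def)
  qed (simp add: middle_code_def)
  moreover have "set (reduced_code k i (f i)) \<subseteq> {1, 2}"
    using set_reduced_code candidate_self[OF f i] by blast
  moreover have "set (digits_code k f [Suc i..<m]) \<subseteq> {1, 2}"
    using set_digits_code[OF f] by simp
  ultimately show ?thesis
    using set_index_code[of i] unfolding candidate_code_def by simp
qed

section \<open>Numerical semigroups\<close>

lemma numerical_semigroup_add:
  "numerical_semigroup S \<Longrightarrow> a \<in> S \<Longrightarrow> b \<in> S \<Longrightarrow> a + b \<in> S"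
  unfolding numerical_semigroup_def by blast

lemma numerical_semigroup_ex_above:
  assumes "numerical_semigroup S"
  obtains N where "\<And>x. N < x \<Longrightarrow> x \<in> S"
proof -
  have "finite (UNIV - S)" using assms unfolding numerical_semigroup_def by blast
  then obtain N where N: "\<forall>x\<in>UNIV - S. x \<le> N" using finite_nat_set_iff_bounded_le by blast
  show ?thesis
  proof (rule that)
    show "x \<in> S" if "N < x" for x using N that by force
  qed
qed

lemma
  assumes "numerical_semigroup S"
  shows multiplicity_in: "multiplicity S \<in> S"
    and multiplicity_pos: "0 < multiplicity S"
    and not_in_below_multiplicity: "0 < x \<Longrightarrow> x < multiplicity S \<Longrightarrow> x \<notin> S"
proof -
  obtain N where "\<And>x. N < x \<Longrightarrow> x \<in> S" using numerical_semigroup_ex_above[OF assms] by blast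
  then have "Suc N \<in> S" by simp
  then have ex: "\<exists>x. x \<in> S \<and> x \<noteq> 0" by blast
  show "multiplicity S \<in> S" "0 < multiplicity S"
    using LeastI_ex[OF ex] unfolding multiplicity_def by auto
  show "x \<notin> S" if "0 < x" "x < multiplicity S"
    using not_less_Least[of x "\<lambda>x. x \<in> S \<and> x \<noteq> 0"] that unfolding multiplicity_def by auto
qed

lemma multiple_of_multiplicity_in:
  assumes "numerical_semigroup S"
  shows "t * multiplicity S \<in> S"
proof (induction t)
  case 0
  then show ?case using assms unfolding numerical_semigroup_def by simp
next
  case (Suc t)
  then show ?case using numerical_semigroup_add[OF assms multiplicity_in[OF assms]] by simp
qed

lemma
  assumes "numerical_semigroup S" "UNIV - S \<noteq> {}"
  shows frobenius_not_in: "frobenius S \<notin> S"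
    and greater_frobenius_in: "frobenius S < x \<Longrightarrow> x \<in> S"
proof -
  have "finite (UNIV - S)" using assms(1) unfolding numerical_semigroup_def by blast
  then show "frobenius S \<notin> S"
    using Max_in[OF _ assms(2)] unfolding frobenius_def by auto
  show "x \<in> S" if "frobenius S < x"
    using Max_ge[OF \<open>finite (UNIV - S)\<close>, of x] that unfolding frobenius_def by auto
qed

lemma min_gens_diff_not_in:
  assumes "x \<in> min_gens S" "a \<in> S" "0 < a" "a < x"
  shows "x - a \<notin> S"
proof
  assume "x - a \<in> S"
  with assms have "x \<in> {a + b | a b. a \<in> S - {0} \<and> b \<in> S - {0}}" by force
  with assms(1) show False unfolding min_gens_def by blast
qed

lemma finite_min_gens:
  assumes "numerical_semigroup S"
  shows "finite (min_gens S)"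
proof -
  obtain N where N: "\<And>x. N < x \<Longrightarrow> x \<in> S" using numerical_semigroup_ex_above[OF assms] by blast
  let ?m = "multiplicity S"
  have "x \<le> N + ?m" if "x \<in> min_gens S" for x
  proof (rule ccontr)
    assume "\<not> x \<le> N + ?m"
    then have "x - ?m \<in> S" using N by simp
    moreover have "?m < x" using \<open>\<not> x \<le> N + ?m\<close> by simp
    ultimately show False
      using min_gens_diff_not_in[OF that multiplicity_in[OF assms] multiplicity_pos[OF assms]] by blast
  qed
  then show ?thesis by (meson finite_nat_set_iff_bounded_le)
qed

lemma inj_on_mod_multiplicity_min_gens:
  assumes "numerical_semigroup S"
  shows "inj_on (\<lambda>x. x mod multiplicity S) (min_gens S)"
proof (rule linorder_inj_onI')
  fix x y assume x: "x \<in> min_gens S" and y: "y \<in> min_gens S" and "x < y"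
  show "x mod multiplicity S \<noteq> y mod multiplicity S"
  proof
    assume "x mod multiplicity S = y mod multiplicity S"
    then have "multiplicity S dvd y - x"
      using mod_eq_dvd_iff_nat[of x y "multiplicity S"] \<open>x < y\<close> by auto
    then have "y - x \<in> S" using multiple_of_multiplicity_in[OF assms] by (auto simp: mult.commute)
    moreover have "x \<in> S" "0 < x" using x unfolding min_gens_def by auto
    ultimately show False using min_gens_diff_not_in[OF y] \<open>x < y\<close> by blast
  qed
qed

lemma min_gens_below_double_multiplicity:
  assumes "numerical_semigroup S"
  shows "min_gens S \<inter> {..<2 * multiplicity S} = {multiplicity S..2 * multiplicity S - 1} \<inter> S"
proof -
  let ?m = "multiplicity S"
  have ge: "?m \<le> x" if "x \<in> S" "0 < x" for x
    using not_in_below_multiplicity[OF assms] that by (meson not_le)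
  have "2 * ?m \<le> a + b" if "a \<in> S" "b \<in> S" "0 < a" "0 < b" for a b
    using ge[OF that(1,3)] ge[OF that(2,4)] by simp
  then have "x \<in> min_gens S" if "x \<in> S" "0 < x" "x < 2 * ?m" for x
    using that unfolding min_gens_def by fastforce
  then show ?thesis
    using ge multiplicity_pos[OF assms] unfolding min_gens_def by fastforce
qed

lemma e2_eq_card_min_gens_ge:
  assumes "numerical_semigroup S"
  shows "e2 S = int (card {x \<in> min_gens S. 2 * multiplicity S \<le> x})"
proof -
  let ?H = "{x \<in> min_gens S. 2 * multiplicity S \<le> x}"
  have "min_gens S = (min_gens S \<inter> {..<2 * multiplicity S}) \<union> ?H" by auto
  moreover have "(min_gens S \<inter> {..<2 * multiplicity S}) \<inter> ?H = {}" by auto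
  ultimately have "card (min_gens S) = card (min_gens S \<inter> {..<2 * multiplicity S}) + card ?H"
    using finite_min_gens[OF assms] by (metis card_Un_disjoint finite_Un)
  then show ?thesis
    unfolding e2_def embdim_def e1_def min_gens_below_double_multiplicity[OF assms] by simp
qed

section \<open>The semigroups in \<open>C(k, g)\<close>\<close>

text \<open>
  For \<open>S \<in> C(k, g)\<close> of multiplicity \<open>m\<close> this is the Kunz coordinate of residue \<open>q\<close>, the least
  \<open>t \<ge> 1\<close> with \<open>tm + q \<in> S\<close>, since \<open>3m + q\<close> exceeds the Frobenius number.
\<close>

definition kunz :: "nat set \<Rightarrow> nat \<Rightarrow> nat \<Rightarrow> nat" where
  "kunz S m q = (if m + q \<in> S then 1 else if 2 * m + q \<in> S then 2 else 3)"

definition candidates :: "nat set \<Rightarrow> nat set" where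
  "candidates S = {i. candidate (multiplicity S) (kunz S (multiplicity S)) i}"

lemma finite_candidates: "finite (candidates S)"
  by (rule finite_subset[of _ "{1..<multiplicity S}"]) (auto simp: candidates_def candidate_def)

locale C_semigroup =
  fixes S :: "nat set" and k g :: nat
  assumes in_C_set: "S \<in> C_set k g" and k_pos: "0 < k"
begin

abbreviation m :: nat where "m \<equiv> multiplicity S"

lemma numerical: "numerical_semigroup S"
  using in_C_set unfolding C_set_def by simp

lemma add_in: "a \<in> S \<Longrightarrow> b \<in> S \<Longrightarrow> a + b \<in> S"
  by (rule numerical_semigroup_add[OF numerical])

lemma m_in: "m \<in> S" and m_pos: "0 < m" and not_in_below_m: "0 < x \<Longrightarrow> x < m \<Longrightarrow> x \<notin> S"
  using multiplicity_in multiplicity_pos not_in_below_multiplicity numerical by blast+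

lemma k_less_m: "k < m"
  using in_C_set unfolding C_set_def by simp

lemma frobenius_eq: "frobenius S = 2 * m + k"
  using in_C_set unfolding C_set_def by simp

lemma
  shows frobenius_gap: "2 * m + k \<notin> S"
    and above_frobenius: "2 * m + k < x \<Longrightarrow> x \<in> S"
proof -
  have "UNIV - S \<noteq> {}"
    using not_in_below_m[of 1] k_pos k_less_m by auto
  then show "2 * m + k \<notin> S" "2 * m + k < x \<Longrightarrow> x \<in> S"
    using frobenius_not_in greater_frobenius_in numerical frobenius_eq by metis+
qed

lemma mem_iff_kunz: "x \<in> S \<longleftrightarrow> x mod m = 0 \<or> kunz S m (x mod m) \<le> x div m"
proof -
  define q t where "q = x mod m" and "t = x div m"
  have x: "x = t * m + q" and "q < m" unfolding q_def t_def using m_pos by simp_all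
  have "x \<in> S \<longleftrightarrow> q = 0 \<or> kunz S m q \<le> t"
  proof -
    consider "q = 0" | "t = 0" "q \<noteq> 0" | "t = 1" "q \<noteq> 0" | "t = 2" "q \<noteq> 0" | "3 \<le> t" "q \<noteq> 0"
      by linarith
    then show ?thesis
    proof cases
      case 1
      then show ?thesis using multiple_of_multiplicity_in[OF numerical] x by simp
    next
      case 2
      then show ?thesis using not_in_below_m x \<open>q < m\<close> by (simp add: kunz_def)
    next
      case 3
      then show ?thesis using x by (simp add: kunz_def)
    next
      case 4
      have "m + q \<in> S \<Longrightarrow> 2 * m + q \<in> S"
        using add_in[OF m_in, of "m + q"] by (simp add: mult_2 add.assoc)
      with 4 show ?thesis using x by (auto simp: kunz_def)
    next
      case 5
      then have "3 * m \<le> t * m" by simp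
      then have "2 * m + k < x" using x k_less_m by linarith
      then have "x \<in> S" by (rule above_frobenius)
      with 5 show ?thesis by (simp add: kunz_def)
    qed
  qed
  then show ?thesis unfolding q_def t_def .
qed

lemma genus_eq_sum_kunz: "g = (\<Sum>q\<in>{1..<m}. kunz S m q)"
proof -
  have "bij_betw (\<lambda>x. (x mod m, x div m)) (UNIV - S) (SIGMA q:{1..<m}. {..<kunz S m q})"
  proof (rule bij_betw_byWitness[where f' = "\<lambda>(q, t). t * m + q"])
    show "\<forall>x\<in>UNIV - S. (\<lambda>(q, t). t * m + q) (x mod m, x div m) = x" by simp
    show "\<forall>y\<in>SIGMA q:{1..<m}. {..<kunz S m q}. (\<lambda>x. (x mod m, x div m)) ((\<lambda>(q, t). t * m + q) y) = y"
      by auto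
    show "(\<lambda>x. (x mod m, x div m)) ` (UNIV - S) \<subseteq> (SIGMA q:{1..<m}. {..<kunz S m q})"
      using mem_iff_kunz m_pos by (auto simp: not_le)
    show "(\<lambda>(q, t). t * m + q) ` (SIGMA q:{1..<m}. {..<kunz S m q}) \<subseteq> UNIV - S"
      using mem_iff_kunz by auto
  qed
  then have "card (UNIV - S) = card (SIGMA q:{1..<m}. {..<kunz S m q})"
    by (rule bij_betw_same_card)
  also have "\<dots> = (\<Sum>q\<in>{1..<m}. kunz S m q)"
    by (simp add: card_SigmaI)
  finally show ?thesis
    using in_C_set unfolding C_set_def genus_def by simp
qed

lemma admissible_kunz: "admissible k m (kunz S m)"
  unfolding admissible_def
proof (intro conjI ballI)
  show "1 \<le> k" "k < m" using k_pos k_less_m by simp_all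
  fix q assume "q \<in> {1..<m}"
  have "m + k \<notin> S"
    using add_in[OF m_in, of "m + k"] frobenius_gap by (auto simp: mult_2 add.assoc)
  moreover have "k < q \<Longrightarrow> 2 * m + q \<in> S" by (rule above_frobenius) simp
  ultimately show "kunz S m q \<in> kunz_range k q"
    using frobenius_gap unfolding kunz_def kunz_range_def by auto
qed

lemma min_gens_residue_not_sum:
  assumes x: "x \<in> min_gens S" "2 * m \<le> x" and j: "j \<in> {1..<x mod m}"
  shows "m + j \<notin> S \<or> m + (x mod m - j) \<notin> S"
proof (rule ccontr)
  define q t where "q = x mod m" and "t = x div m"
  have x_eq: "x = t * m + q" and "q < m" unfolding q_def t_def using m_pos by simp_all
  have "2 \<le> t" using x(2) m_pos unfolding t_def by (simp add: less_eq_div_iff_mult_less_eq)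
  have "1 \<le> j" "j < q" using j unfolding q_def by simp_all
  assume "\<not> ?thesis"
  then have "m + j \<in> S" "m + (q - j) \<in> S" unfolding q_def by simp_all
  then have "(m + (q - j)) + (t - 2) * m \<in> S"
    using add_in multiple_of_multiplicity_in[OF numerical] by blast
  moreover have "x - (m + j) = (m + (q - j)) + (t - 2) * m"
    using \<open>j < q\<close> \<open>2 \<le> t\<close> unfolding x_eq by (simp add: diff_mult_distrib algebra_simps)
  moreover have "m + j < x"
    using \<open>j < q\<close> \<open>2 \<le> t\<close> \<open>q < m\<close> x(2) unfolding x_eq by simp
  ultimately show False
    using min_gens_diff_not_in[OF x(1) \<open>m + j \<in> S\<close>] m_pos by simp
qed

lemma min_gens_residue_candidate:
  assumes x: "x \<in> min_gens S" "2 * m \<le> x"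
  shows "candidate m (kunz S m) (x mod m)"
proof -
  define q t where "q = x mod m" and "t = x div m"
  have x_eq: "x = t * m + q" and "q < m" unfolding q_def t_def using m_pos by simp_all
  have "2 \<le> t" using x(2) m_pos unfolding t_def by (simp add: less_eq_div_iff_mult_less_eq)
  have below: "x - a \<notin> S" if "a \<in> S" "0 < a" "a < x" for a
    using min_gens_diff_not_in[OF x(1) that] .
  have "(t - 1) * m \<in> S" by (rule multiple_of_multiplicity_in[OF numerical])
  have "2 * m \<le> t * m" using \<open>2 \<le> t\<close> by (rule mult_le_mono1)
  then have "m < x" "m + q < x" using m_pos \<open>q < m\<close> unfolding x_eq by linarith+
  have "q \<noteq> 0"
  proof
    assume "q = 0"
    then have "x - m = (t - 1) * m" unfolding x_eq by (simp add: diff_mult_distrib)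
    with below[OF m_in m_pos \<open>m < x\<close>] \<open>(t - 1) * m \<in> S\<close> show False by simp
  qed
  have "m + q \<notin> S"
  proof
    assume "m + q \<in> S"
    moreover have "x - (m + q) = (t - 1) * m" unfolding x_eq by (simp add: diff_mult_distrib)
    ultimately show False using below[of "m + q"] \<open>m + q < x\<close> \<open>(t - 1) * m \<in> S\<close> m_pos by simp
  qed
  then have "2 \<le> kunz S m q" unfolding kunz_def by simp
  moreover have "kunz S m j \<noteq> 1 \<or> kunz S m (q - j) \<noteq> 1" if "j \<in> {1..<q}" for j
    using min_gens_residue_not_sum[OF x, of j] that unfolding q_def kunz_def by auto
  ultimately show ?thesis
    using \<open>q \<noteq> 0\<close> \<open>q < m\<close> unfolding candidate_def q_def by auto
qed

lemma e2_le_card_candidates: "e2 S \<le> int (card (candidates S))"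
proof -
  let ?H = "{x \<in> min_gens S. 2 * m \<le> x}"
  have "inj_on (\<lambda>x. x mod m) ?H"
    using inj_on_mod_multiplicity_min_gens[OF numerical] by (rule inj_on_subset) blast
  moreover have "(\<lambda>x. x mod m) ` ?H \<subseteq> candidates S"
    using min_gens_residue_candidate unfolding candidates_def by blast
  ultimately have "card ?H \<le> card (candidates S)"
    using finite_candidates by (rule card_inj_on_le)
  then show ?thesis using e2_eq_card_min_gens_ge[OF numerical] by simp
qed

lemma eq_if_kunz_eq:
  assumes "C_semigroup S' k g'" "multiplicity S' = m" "\<forall>q\<in>{1..<m}. kunz S' m q = kunz S m q"
  shows "S' = S"
proof -
  have "x \<in> S' \<longleftrightarrow> x \<in> S" for x
  proof (cases "x mod m = 0")
    case False
    then have "x mod m \<in> {1..<m}" using m_pos by simp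
    then show ?thesis using C_semigroup.mem_iff_kunz[OF assms(1)] mem_iff_kunz assms(2,3) by simp
  qed (use C_semigroup.mem_iff_kunz[OF assms(1)] mem_iff_kunz assms(2) in simp)
  then show ?thesis by blast
qed

lemma sum_list_kunz_code: "sum_list (digits_code k (kunz S m) [1..<m]) + 4 = g + k"
  using sum_list_digits_code[OF admissible_kunz] sum_code_weight[OF admissible_kunz] genus_eq_sum_kunz
  by simp

lemma kunz_code_in_compositions12: "digits_code k (kunz S m) [1..<m] \<in> compositions12 (g + k - 4)"
  using set_digits_code[OF admissible_kunz] sum_list_kunz_code unfolding compositions12_def by simp

lemma candidate_code_in_compositions12_le:
  assumes "i \<in> candidates S" "i \<noteq> k"
  shows "candidate_code k m (kunz S m) i \<in> compositions12_le (g + k - 2)"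
proof -
  have i: "candidate m (kunz S m) i" using assms(1) unfolding candidates_def by simp
  show ?thesis
    using set_candidate_code[OF admissible_kunz i] sum_list_candidate_code[OF admissible_kunz i assms(2)]
      sum_code_weight[OF admissible_kunz] genus_eq_sum_kunz
    unfolding compositions12_le_def by simp
qed

end

lemma C_semigroupI: "S \<in> C_set k g \<Longrightarrow> 0 < k \<Longrightarrow> C_semigroup S k g"
  by unfold_locales

lemma inj_on_kunz_code:
  assumes "0 < k"
  shows "inj_on (\<lambda>S. digits_code k (kunz S (multiplicity S)) [1..<multiplicity S]) (C_set k g)"
proof (rule inj_onI)
  fix S S' assume S: "S \<in> C_set k g" and S': "S' \<in> C_set k g"
    and eq: "digits_code k (kunz S (multiplicity S)) [1..<multiplicity S]
      = digits_code k (kunz S' (multiplicity S')) [1..<multiplicity S']"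
  interpret S: C_semigroup S k g by (rule C_semigroupI[OF S assms])
  interpret S': C_semigroup S' k g by (rule C_semigroupI[OF S' assms])
  have "multiplicity S = multiplicity S' \<and> (\<forall>q\<in>{1..<multiplicity S}. kunz S (multiplicity S) q
      = kunz S' (multiplicity S') q)"
    using S.m_pos S'.m_pos by (intro digits_code_inj[OF S.admissible_kunz S'.admissible_kunz _ _ _ eq]) simp_all
  then have "multiplicity S = multiplicity S'"
    and "\<forall>q\<in>{1..<multiplicity S'}. kunz S (multiplicity S') q = kunz S' (multiplicity S') q"
    by auto
  then show "S = S'" by (rule S'.eq_if_kunz_eq[OF C_semigroupI[OF S assms]])
qed

lemma
  assumes "0 < k"
  shows finite_C_set: "finite (C_set k g)"
    and card_C_set_le: "card (C_set k g) \<le> fib (g + k - 3)"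
proof -
  let ?code = "\<lambda>S. digits_code k (kunz S (multiplicity S)) [1..<multiplicity S]"
  have image: "?code ` C_set k g \<subseteq> compositions12 (g + k - 4)"
    using C_semigroup.kunz_code_in_compositions12[OF C_semigroupI[OF _ assms]] by blast
  with inj_on_kunz_code[OF assms] show "finite (C_set k g)"
    using finite_compositions12 by (meson finite_imageD finite_subset)
  show "card (C_set k g) \<le> fib (g + k - 3)"
  proof (cases "C_set k g = {}")
    case False
    then obtain S where "S \<in> C_set k g" by blast
    then have "4 \<le> g + k"
      using C_semigroup.sum_list_kunz_code[OF C_semigroupI[OF _ assms]] by fastforce
    have "card (C_set k g) = card (?code ` C_set k g)"
      using card_image[OF inj_on_kunz_code[OF assms]] by simp
    also have "\<dots> \<le> card (compositions12 (g + k - 4))"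
      by (rule card_mono[OF finite_compositions12 image])
    also have "\<dots> = fib (g + k - 3)"
      using card_compositions12 \<open>4 \<le> g + k\<close> by (simp add: Suc_diff_le[symmetric])
    finally show ?thesis .
  qed simp
qed

lemma inj_on_candidate_code:
  assumes "0 < k"
  shows "inj_on (\<lambda>(S, i). candidate_code k (multiplicity S) (kunz S (multiplicity S)) i)
    {(S, i). S \<in> C_set k g \<and> i \<in> candidates S \<and> i \<noteq> k}"
proof (rule inj_onI)
  fix p p'
  assume p: "p \<in> {(S, i). S \<in> C_set k g \<and> i \<in> candidates S \<and> i \<noteq> k}"
    and p': "p' \<in> {(S, i). S \<in> C_set k g \<and> i \<in> candidates S \<and> i \<noteq> k}"
    and eq: "(\<lambda>(S, i). candidate_code k (multiplicity S) (kunz S (multiplicity S)) i) p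
      = (\<lambda>(S, i). candidate_code k (multiplicity S) (kunz S (multiplicity S)) i) p'"
  obtain S i where pS: "p = (S, i)" by (cases p)
  obtain S' i' where pS': "p' = (S', i')" by (cases p')
  have S: "S \<in> C_set k g" "candidate (multiplicity S) (kunz S (multiplicity S)) i"
    using p unfolding pS candidates_def by simp_all
  have S': "S' \<in> C_set k g" "candidate (multiplicity S') (kunz S' (multiplicity S')) i'"
    using p' unfolding pS' candidates_def by simp_all
  interpret S: C_semigroup S k g by (rule C_semigroupI[OF S(1) assms])
  interpret S': C_semigroup S' k g by (rule C_semigroupI[OF S'(1) assms])
  have "i = i' \<and> multiplicity S = multiplicity S'
      \<and> (\<forall>q\<in>{1..<multiplicity S}. kunz S (multiplicity S) q = kunz S' (multiplicity S') q)"
    using eq unfolding pS pS'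
    by (intro candidate_code_inj[OF S.admissible_kunz S'.admissible_kunz S(2) S'(2)]) simp
  then have "i = i'" and "multiplicity S = multiplicity S'"
    and "\<forall>q\<in>{1..<multiplicity S'}. kunz S (multiplicity S') q = kunz S' (multiplicity S') q"
    by auto
  moreover from this(2,3) have "S = S'" by (rule S'.eq_if_kunz_eq[OF C_semigroupI[OF S(1) assms]])
  ultimately show "p = p'" unfolding pS pS' by simp
qed

lemma card_candidate_pairs_le:
  assumes "0 < k" "0 < g"
  shows "card {(S, i). S \<in> C_set k g \<and> i \<in> candidates S \<and> i \<noteq> k} + 1 \<le> fib (g + k + 1)"
proof -
  let ?P = "{(S, i). S \<in> C_set k g \<and> i \<in> candidates S \<and> i \<noteq> k}"
  let ?code = "\<lambda>(S, i). candidate_code k (multiplicity S) (kunz S (multiplicity S)) i"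
  have image: "?code ` ?P \<subseteq> compositions12_le (g + k - 2)"
  proof (rule image_subsetI)
    fix p assume "p \<in> ?P"
    then obtain S i where "p = (S, i)" "S \<in> C_set k g" "i \<in> candidates S" "i \<noteq> k" by blast
    then show "?code p \<in> compositions12_le (g + k - 2)"
      using C_semigroup.candidate_code_in_compositions12_le[OF C_semigroupI[OF _ assms(1)]] by simp
  qed
  have "card ?P = card (?code ` ?P)" using card_image[OF inj_on_candidate_code[OF assms(1)]] by simp
  also have "\<dots> \<le> card (compositions12_le (g + k - 2))"
    by (rule card_mono[OF finite_compositions12_le image])
  finally have "card ?P \<le> card (compositions12_le (g + k - 2))" .
  moreover have "g + k - 2 + 3 = g + k + 1" using assms by simp
  ultimately show ?thesis using card_compositions12_le[of "g + k - 2"] by simp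
qed

lemma sum_e2_le_card_candidate_pairs:
  assumes "0 < k"
  shows "(\<Sum>S\<in>C_set k g. e2 S)
    \<le> int (card (C_set k g) + card {(S, i). S \<in> C_set k g \<and> i \<in> candidates S \<and> i \<noteq> k})"
proof -
  let ?C = "C_set k g"
  let ?P = "{(S, i). S \<in> ?C \<and> i \<in> candidates S \<and> i \<noteq> k}"
  have "(\<Sum>S\<in>?C. e2 S) \<le> (\<Sum>S\<in>?C. int (card (candidates S)))"
    using C_semigroup.e2_le_card_candidates[OF C_semigroupI[OF _ assms]] by (intro sum_mono) blast
  also have "\<dots> = int (card (SIGMA S:?C. candidates S))"
    using finite_C_set[OF assms] finite_candidates by (simp add: card_SigmaI)
  also have "card (SIGMA S:?C. candidates S) \<le> card ((\<lambda>S. (S, k)) ` ?C \<union> ?P)"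
  proof (rule card_mono)
    have "finite ?P"
      by (rule finite_subset[OF _ finite_SigmaI[of ?C candidates, OF finite_C_set[OF assms]
            finite_candidates]]) blast
    then show "finite ((\<lambda>S. (S, k)) ` ?C \<union> ?P)"
      using finite_C_set[OF assms] by blast
  qed blast
  also have "\<dots> \<le> card ((\<lambda>S. (S, k)) ` ?C) + card ?P"
    by (rule card_Un_le)
  also have "card ((\<lambda>S. (S, k)) ` ?C) \<le> card ?C"
    by (rule card_image_le[OF finite_C_set[OF assms]])
  finally show ?thesis by simp
qed

lemma fib_diff_3_add_fib_Suc_le: "1 \<le> n \<Longrightarrow> fib (n - 3) + fib (n + 1) \<le> 2 * fib n"
proof (cases n rule: fib.cases)
  case (3 n')
  show ?thesis
  proof (cases n')
    case (Suc n'')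
    have "fib (n - 3) \<le> fib n'" by (rule fib_mono) (simp add: 3)
    then show ?thesis using 3 Suc by (simp add: numeral_eq_Suc)
  qed (simp add: 3 numeral_eq_Suc)
qed simp_all

theorem lemma4p2:
  fixes g k :: nat
  assumes "g > 0" and "k > 0"
  shows "(\<Sum>S\<in>C_set k g. e2 S) \<le> 2 * int (fib (g + k))"
proof -
  have "(\<Sum>S\<in>C_set k g. e2 S)
      \<le> int (card (C_set k g) + card {(S, i). S \<in> C_set k g \<and> i \<in> candidates S \<and> i \<noteq> k})"
    using sum_e2_le_card_candidate_pairs assms(2) .
  also have "\<dots> < int (fib (g + k - 3) + fib (g + k + 1))"
    using card_C_set_le[OF assms(2), of g] card_candidate_pairs_le[OF assms(2,1)] by linarith
  also have "\<dots> \<le> 2 * int (fib (g + k))"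
    using fib_diff_3_add_fib_Suc_le[of "g + k"] assms by linarith
  finally show ?thesis by simp
qed

end
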